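(* Let $\mathcal{C}\subseteq\mathbb{F}_q^n$ be a linear code of length $n$ with covering radius $\rho$, and let $j$ be a positive integer with $j\le\rho$. Define $$\mathcal{Y}_j=\{\mathbf{y}\in\mathbb{F}_q^n : d(\mathbf{y},\mathcal{C})\ge\rho-j\},$$ $$\mathcal{E}_j=\{\mathbf{y}-\mathbf{c} : \mathbf{y}\in\mathcal{Y}_j,\ \mathbf{c}\in\mathcal{C},\ d(\mathbf{y},\mathbf{c})=d(\mathbf{y},\mathcal{C})\},$$ $$P_j=\bigcap_{\mathbf{e}\in\mathcal{E}_j}\mathrm{supp}(\mathbf{e}).$$ Let $\mathcal{C}_j'\subseteq\mathbb{F}_q^{n-|P_j|}$ be the code obtained by puncturing $\mathcal{C}$ at the positions of $P_j$. Then the covering radius $\rho_j'$ of $\mathcal{C}_j'$ satisfies $$\rho_j'\le\max\{\rho-j-1,\ \rho-|P_j|\}.$$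
   Context: $d$ denotes the Hamming distance and $d(\mathbf{y},\mathcal{C})=\min_{\mathbf{c}\in\mathcal{C}}d(\mathbf{y},\mathbf{c})$. The covering radius of a code $\mathcal{C}\subseteq\mathbb{F}_q^N$ is $\max_{\mathbf{y}\in\mathbb{F}_q^N}d(\mathbf{y},\mathcal{C})$. $\mathrm{supp}(\mathbf{e})$ is the set of coordinates where $\mathbf{e}$ is nonzero. Puncturing $\mathcal{C}$ at a set of positions $P$ means deleting the coordinates indexed by $P$ from every codeword, giving the code $\pi_{\{1,\dots,n\}\setminus P}(\mathcal{C})\subseteq\mathbb{F}_q^{n-|P|}$. *)

theory Defs
  imports Main
begin

text \<open>Words over the alphabet 'a indexed by a finite coordinate set I
  (coordinates outside I are zero).  F_q^n is words over I = {0..<n}.\<close>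

definition words :: "nat set \<Rightarrow> (nat \<Rightarrow> 'a::zero) set" where
  "words I = {x. \<forall>i. i \<notin> I \<longrightarrow> x i = 0}"

definition hdist :: "nat set \<Rightarrow> (nat \<Rightarrow> 'a) \<Rightarrow> (nat \<Rightarrow> 'a) \<Rightarrow> nat" where
  "hdist I x y = card {i \<in> I. x i \<noteq> y i}"

definition linear_code :: "nat set \<Rightarrow> (nat \<Rightarrow> 'a::field) set \<Rightarrow> bool" where
  "linear_code I C \<longleftrightarrow> C \<subseteq> words I \<and> (\<lambda>i. 0) \<in> C \<and>
     (\<forall>x\<in>C. \<forall>y\<in>C. (\<lambda>i. x i + y i) \<in> C) \<and>
     (\<forall>a. \<forall>x\<in>C. (\<lambda>i. a * x i) \<in> C)"

definition dist_code :: "nat set \<Rightarrow> (nat \<Rightarrow> 'a) set \<Rightarrow> (nat \<Rightarrow> 'a) \<Rightarrow> nat" where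
  "dist_code I C y = Min ((\<lambda>c. hdist I y c) ` C)"

definition covering_radius :: "nat set \<Rightarrow> (nat \<Rightarrow> 'a::zero) set \<Rightarrow> nat" where
  "covering_radius I C = Max ((\<lambda>y. dist_code I C y) ` words I)"

definition supp :: "(nat \<Rightarrow> 'a::zero) \<Rightarrow> nat set" where
  "supp e = {i. e i \<noteq> 0}"

text \<open>Puncturing at P: delete the coordinates in P, i.e. restrict to I - P.\<close>
definition puncture :: "nat set \<Rightarrow> nat set \<Rightarrow> (nat \<Rightarrow> 'a::zero) set \<Rightarrow> (nat \<Rightarrow> 'a) set" where
  "puncture I P C = (\<lambda>c i. if i \<in> I - P then c i else 0) ` C"

end

theory Submission
  imports Defs "HOL-Library.FuncSet"
begin

text \<open>Take a word y realising the covering radius of the punctured code and a codeword c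
  nearest to y in the full code.  Deleting the coordinates in P from c can only bring it
  closer to y, and it removes exactly the disagreements of y and c inside P.  If
  d(y,C) < \<rho> - j this already gives the first bound.  Otherwise y - c is one of the
  error vectors defining P, so y and c disagree on all of P and the punctured distance
  is at most \<rho> - |P|.\<close>

lemma finite_words:
  assumes "finite I"
  shows "finite (words I :: (nat \<Rightarrow> 'a::{zero,finite}) set)"
proof -
  let ?extend = "\<lambda>f i. if i \<in> I then f i else (0::'a)"
  have "words I \<subseteq> ?extend ` (PiE I (\<lambda>_. UNIV))"
  proof
    fix x :: "nat \<Rightarrow> 'a" assume "x \<in> words I"
    then have "x = ?extend (restrict x I)"
      by (auto simp: words_def fun_eq_iff)
    moreover have "restrict x I \<in> PiE I (\<lambda>_. UNIV)" by simp
    ultimately show "x \<in> ?extend ` (PiE I (\<lambda>_. UNIV))" by (rule image_eqI)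
  qed
  moreover have "finite (PiE I (\<lambda>_. UNIV :: 'a set))"
    using assms by (intro finite_PiE) auto
  ultimately show ?thesis by (meson finite_surj)
qed

lemma zero_in_words: "(\<lambda>i. 0) \<in> words I"
  by (simp add: words_def)

lemma words_mono: "I \<subseteq> J \<Longrightarrow> y \<in> words I \<Longrightarrow> y \<in> words J"
  by (auto simp: words_def)

lemma dist_code_le_hdist:
  "finite C \<Longrightarrow> c \<in> C \<Longrightarrow> dist_code I C y \<le> hdist I y c"
  unfolding dist_code_def by (rule Min_le) auto

lemma dist_code_attained:
  assumes "finite C" "C \<noteq> {}"
  obtains c where "c \<in> C" "hdist I y c = dist_code I C y"
proof -
  have "dist_code I C y \<in> (\<lambda>c. hdist I y c) ` C"
    unfolding dist_code_def using assms by (intro Min_in) auto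
  then show ?thesis using that by (metis imageE)
qed

lemma dist_code_le_covering_radius:
  fixes C :: "(nat \<Rightarrow> 'a::{zero,finite}) set"
  assumes "finite I" "y \<in> words I"
  shows "dist_code I C y \<le> covering_radius I C"
  unfolding covering_radius_def using assms finite_words by (intro Max_ge) auto

lemma covering_radius_attained:
  fixes C :: "(nat \<Rightarrow> 'a::{zero,finite}) set"
  assumes "finite I"
  obtains y where "y \<in> words I" "covering_radius I C = dist_code I C y"
proof -
  have "covering_radius I C \<in> (\<lambda>y. dist_code I C y) ` words I"
    unfolding covering_radius_def using assms finite_words zero_in_words
    by (intro Max_in) auto
  then show ?thesis using that by blast
qed

lemma hdist_split:
  assumes "finite I"
  shows "hdist I y c = hdist (I - P) y c + hdist (I \<inter> P) y c"
proof -
  have "{i \<in> I. y i \<noteq> c i} = {i \<in> I - P. y i \<noteq> c i} \<union> {i \<in> I \<inter> P. y i \<noteq> c i}"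
    by auto
  then show ?thesis
    unfolding hdist_def using assms by (simp add: card_Un_disjoint disjoint_iff)
qed

lemma hdist_eq_card_if_subset_supp:
  fixes y c :: "nat \<Rightarrow> 'a::group_add"
  assumes "y \<in> words I" "c \<in> words I" "P \<subseteq> supp (\<lambda>i. y i - c i)"
  shows "hdist (I \<inter> P) y c = card P"
proof -
  have "y i \<noteq> c i" if "i \<in> P" for i
    using assms(3) that unfolding supp_def by auto
  moreover have "i \<in> I" if "y i \<noteq> c i" for i
  proof (rule ccontr)
    assume "i \<notin> I"
    then have "y i = 0" "c i = 0" using assms(1,2) by (auto simp: words_def)
    then show False using that by simp
  qed
  ultimately have "{i \<in> I \<inter> P. y i \<noteq> c i} = P" by blast
  then show ?thesis by (simp add: hdist_def)
qed

lemma dist_code_puncture_le: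
  assumes "finite I" "finite C" "c \<in> C"
  shows "dist_code (I - P) (puncture I P C) y + hdist (I \<inter> P) y c \<le> hdist I y c"
proof -
  let ?c' = "\<lambda>i. if i \<in> I - P then c i else 0"
  have "?c' \<in> puncture I P C" using assms(3) by (auto simp: puncture_def)
  then have "dist_code (I - P) (puncture I P C) y \<le> hdist (I - P) y ?c'"
    using assms(2) by (intro dist_code_le_hdist) (auto simp: puncture_def)
  also have "hdist (I - P) y ?c' = hdist (I - P) y c"
    unfolding hdist_def by (rule arg_cong[where f = card]) auto
  finally show ?thesis using hdist_split[OF assms(1), of y c P] by linarith
qed

theorem proposition2:
  fixes C :: "(nat \<Rightarrow> 'a::{field,finite}) set" and n j :: nat
  assumes "linear_code {0..<n} C"
    and "0 < j" and "j \<le> covering_radius {0..<n} C"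
  defines "\<rho> \<equiv> covering_radius {0..<n} C"
  defines "Y \<equiv> {y \<in> words {0..<n}. dist_code {0..<n} C y \<ge> \<rho> - j}"
  defines "E \<equiv> {e. \<exists>y\<in>Y. \<exists>c\<in>C. hdist {0..<n} y c = dist_code {0..<n} C y
                        \<and> e = (\<lambda>i. y i - c i)}"
  defines "P \<equiv> \<Inter>e\<in>E. supp e"
  shows "int (covering_radius ({0..<n} - P) (puncture {0..<n} P C))
           \<le> max (int \<rho> - int j - 1) (int \<rho> - int (card P))"
proof -
  let ?I = "{0..<n}"
  have finite_C: "finite C" and C_words: "C \<subseteq> words ?I" and "C \<noteq> {}"
    using assms(1) finite_words[of ?I] finite_subset
    by (auto simp: linear_code_def)
  obtain y where y: "y \<in> words (?I - P)"
    and radius: "covering_radius (?I - P) (puncture ?I P C) = dist_code (?I - P) (puncture ?I P C) y"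
    using covering_radius_attained[of "?I - P" "puncture ?I P C"] by auto
  have y_words: "y \<in> words ?I" using words_mono[OF _ y] by blast
  obtain c where c: "c \<in> C" and nearest: "hdist ?I y c = dist_code ?I C y"
    using dist_code_attained[OF finite_C \<open>C \<noteq> {}\<close>] .
  have punctured: "dist_code (?I - P) (puncture ?I P C) y + hdist (?I \<inter> P) y c \<le> dist_code ?I C y"
    using dist_code_puncture_le[of ?I C c P y] finite_C c nearest by simp
  show ?thesis
  proof (cases "y \<in> Y")
    case False
    then have "dist_code ?I C y < \<rho> - j" using y_words unfolding Y_def by simp
    then have "int (covering_radius (?I - P) (puncture ?I P C)) \<le> int \<rho> - int j - 1"
      using punctured radius by linarith
    then show ?thesis by linarith
  next
    case True
    then have "(\<lambda>i. y i - c i) \<in> E" using c nearest unfolding E_def by blast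
    then have "P \<subseteq> supp (\<lambda>i. y i - c i)" unfolding P_def by blast
    then have "hdist (?I \<inter> P) y c = card P"
      using c C_words y_words by (intro hdist_eq_card_if_subset_supp) auto
    moreover have "dist_code ?I C y \<le> \<rho>"
      unfolding \<rho>_def by (rule dist_code_le_covering_radius[OF _ y_words]) simp
    ultimately have "int (covering_radius (?I - P) (puncture ?I P C)) \<le> int \<rho> - int (card P)"
      using punctured radius by linarith
    then show ?thesis by linarith
  qed
qed

end
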